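(* Let $G=(V,E)$ be a finite simple graph and let $x,y$ be easy construction sequences for $G$ whose restrictions to $V$ coincide (the vertices appear in the same order in $x$ and in $y$). Then $\nu(x)=\nu(y)$.
   Context: For a finite simple graph $G=(V,E)$ with $\ell=|V|+|E|$, a construction sequence (c-sequence) is a bijection $x:\{1,\dots,\ell\}\to V\sqcup E$ such that every edge $e=uw$ satisfies $x^{-1}(e)>\max\{x^{-1}(u),x^{-1}(w)\}$. The cost of $x$ is $\nu(x)=\sum_{e=uw\in E}\big(2x^{-1}(e)-x^{-1}(u)-x^{-1}(w)\big)$. A c-sequence is easy if no edge precedes a vertex. *)

theory Defs
  imports Main
begin

definition simple_graph :: "'a set \<Rightarrow> 'a set set \<Rightarrow> bool" where
  "simple_graph V E \<longleftrightarrow> finite V \<and> (\<forall>e\<in>E. e \<subseteq> V \<and> card e = 2)"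

definition elems :: "'a set \<Rightarrow> 'a set set \<Rightarrow> ('a + 'a set) set" where
  "elems V E = V <+> E"

definition pos :: "'a set \<Rightarrow> 'a set set \<Rightarrow> (nat \<Rightarrow> 'a + 'a set) \<Rightarrow> ('a + 'a set) \<Rightarrow> nat" where
  "pos V E x a = inv_into {1..card V + card E} x a"

definition c_sequence :: "'a set \<Rightarrow> 'a set set \<Rightarrow> (nat \<Rightarrow> 'a + 'a set) \<Rightarrow> bool" where
  "c_sequence V E x \<longleftrightarrow>
     bij_betw x {1..card V + card E} (elems V E) \<and>
     (\<forall>e\<in>E. \<forall>u\<in>e. pos V E x (Inr e) > pos V E x (Inl u))"

definition easy :: "'a set \<Rightarrow> 'a set set \<Rightarrow> (nat \<Rightarrow> 'a + 'a set) \<Rightarrow> bool" where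
  "easy V E x \<longleftrightarrow> c_sequence V E x \<and>
     (\<forall>e\<in>E. \<forall>v\<in>V. pos V E x (Inl v) < pos V E x (Inr e))"

definition cost :: "'a set \<Rightarrow> 'a set set \<Rightarrow> (nat \<Rightarrow> 'a + 'a set) \<Rightarrow> int" where
  "cost V E x = (\<Sum>e\<in>E. 2 * int (pos V E x (Inr e)) - (\<Sum>u\<in>e. int (pos V E x (Inl u))))"

end

theory Submission
  imports Defs
begin

text \<open>In an easy construction sequence the vertices occupy the positions \<open>1, \<dots>, |V|\<close> and the
  edges the positions \<open>|V| + 1, \<dots>, |V| + |E|\<close>. Hence the position of a vertex is one more than
  the number of vertices preceding it, so it depends only on the order of the vertices, while the
  edge positions always sum to \<open>(|V| + 1) + \<dots> + (|V| + |E|)\<close>. Both parts of the cost are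
  therefore determined by the vertex order.\<close>

lemma elems_eq: "elems V E = Inl ` V \<union> Inr ` E"
  unfolding elems_def by auto

lemma c_sequence_pos_bij:
  assumes "c_sequence V E x"
  shows "bij_betw (pos V E x) (elems V E) {1..card V + card E}"
  using assms bij_betw_inv_into unfolding c_sequence_def pos_def by blast

lemma atLeastAtMost_split_below:
  fixes P Q :: "nat set"
  assumes PQ: "P \<union> Q = {1..n}" and below: "\<And>p q. p \<in> P \<Longrightarrow> q \<in> Q \<Longrightarrow> p < q"
  shows "P = {1..card P}" and "Q = {card P + 1..n}"
proof -
  have fin: "finite P"
    using PQ by (metis finite_Un finite_atLeastAtMost)
  show P_eq: "P = {1..card P}"
  proof (cases "P = {}")
    case False
    define m where "m = Max P"
    have m: "m \<in> P"
      using Max_in[OF fin False] by (simp add: m_def)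
    have "P = {1..m}"
    proof
      show "P \<subseteq> {1..m}"
        using PQ fin by (auto simp: m_def)
      show "{1..m} \<subseteq> P"
      proof
        fix k assume k: "k \<in> {1..m}"
        have "m \<le> n"
          using m PQ by auto
        with k PQ have "k \<in> P \<union> Q" by auto
        moreover have "k \<notin> Q"
          using below[OF m] k by fastforce
        ultimately show "k \<in> P" by blast
      qed
    qed
    then show ?thesis by simp
  qed simp
  have "P \<inter> Q = {}"
    using below by blast
  then have "Q = {1..n} - P"
    using PQ by blast
  also have "\<dots> = {card P + 1..n}"
    by (subst P_eq) auto
  finally show "Q = {card P + 1..n}" .
qed

lemma easy_pos_inj:
  assumes "easy V E x"
  shows "inj_on (pos V E x) (elems V E)"
  using assms c_sequence_pos_bij bij_betw_imp_inj_on unfolding easy_def by blast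

lemma easy_pos_image:
  assumes "easy V E x"
  shows "pos V E x ` Inl ` V = {1..card V}"
    and "pos V E x ` Inr ` E = {card V + 1..card V + card E}"
proof -
  have bij: "bij_betw (pos V E x) (elems V E) {1..card V + card E}"
    using assms c_sequence_pos_bij unfolding easy_def by blast
  have "pos V E x ` Inl ` V \<union> pos V E x ` Inr ` E = {1..card V + card E}"
    using bij_betw_imp_surj_on[OF bij] by (simp add: elems_eq image_Un)
  moreover have "\<And>p q. p \<in> pos V E x ` Inl ` V \<Longrightarrow> q \<in> pos V E x ` Inr ` E \<Longrightarrow> p < q"
    using assms unfolding easy_def by blast
  moreover have "card (pos V E x ` Inl ` V) = card V"
  proof -
    have "inj_on (pos V E x) (Inl ` V)"
      using bij_betw_imp_inj_on[OF bij] by (rule inj_on_subset) (simp add: elems_eq)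
    then show ?thesis
      by (simp add: card_image)
  qed
  ultimately show "pos V E x ` Inl ` V = {1..card V}"
    and "pos V E x ` Inr ` E = {card V + 1..card V + card E}"
    using atLeastAtMost_split_below by metis+
qed

lemma rank_eq_card_less:
  fixes f :: "'a \<Rightarrow> nat"
  assumes "inj_on f A" and "f ` A = {1..card A}" and "v \<in> A"
  shows "f v = card {w \<in> A. f w < f v} + 1"
proof -
  have "f ` {w \<in> A. f w < f v} = {1..<f v}"
  proof
    show "f ` {w \<in> A. f w < f v} \<subseteq> {1..<f v}"
      using assms(2) by auto
    show "{1..<f v} \<subseteq> f ` {w \<in> A. f w < f v}"
    proof
      fix k assume k: "k \<in> {1..<f v}"
      moreover have "f v \<le> card A"
        using assms(2,3) by auto
      ultimately have "k \<in> f ` A"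
        using assms(2) by auto
      with k show "k \<in> f ` {w \<in> A. f w < f v}" by auto
    qed
  qed
  moreover have "card (f ` {w \<in> A. f w < f v}) = card {w \<in> A. f w < f v}"
    using assms(1) by (auto intro: card_image inj_on_subset)
  moreover have "f v \<ge> 1"
    using assms(2,3) by auto
  ultimately show ?thesis by simp
qed

lemma easy_pos_vertex_eq_rank:
  assumes "easy V E x" and "v \<in> V"
  shows "pos V E x (Inl v) = card {w \<in> V. pos V E x (Inl w) < pos V E x (Inl v)} + 1"
proof (rule rank_eq_card_less[where f = "\<lambda>w. pos V E x (Inl w)"])
  show "inj_on (\<lambda>w. pos V E x (Inl w)) V"
    using easy_pos_inj[OF assms(1)] by (auto simp: inj_on_def elems_eq)
  show "(\<lambda>w. pos V E x (Inl w)) ` V = {1..card V}"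
    using easy_pos_image(1)[OF assms(1)] by (simp add: image_image)
qed (fact assms(2))

lemma easy_pos_vertex_eq:
  assumes "easy V E x" and "easy V E y"
    and "\<forall>u\<in>V. \<forall>w\<in>V. pos V E x (Inl u) < pos V E x (Inl w) \<longleftrightarrow> pos V E y (Inl u) < pos V E y (Inl w)"
    and "v \<in> V"
  shows "pos V E x (Inl v) = pos V E y (Inl v)"
proof -
  have "{w \<in> V. pos V E x (Inl w) < pos V E x (Inl v)} = {w \<in> V. pos V E y (Inl w) < pos V E y (Inl v)}"
    using assms(3,4) by blast
  then show ?thesis
    using easy_pos_vertex_eq_rank[OF assms(1,4)] easy_pos_vertex_eq_rank[OF assms(2,4)] by simp
qed

lemma easy_sum_pos_edges:
  assumes "easy V E x"
  shows "(\<Sum>e\<in>E. int (pos V E x (Inr e))) = (\<Sum>k = card V + 1..card V + card E. int k)"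
proof -
  have "inj_on (\<lambda>e. pos V E x (Inr e)) E"
    using easy_pos_inj[OF assms] by (auto simp: inj_on_def elems_eq)
  moreover have "(\<lambda>e. pos V E x (Inr e)) ` E = {card V + 1..card V + card E}"
    using easy_pos_image(2)[OF assms] by (simp add: image_image)
  ultimately show ?thesis
    using sum.reindex[of "\<lambda>e. pos V E x (Inr e)" E int] by simp
qed

lemma cost_eq_diff:
  "cost V E x = 2 * (\<Sum>e\<in>E. int (pos V E x (Inr e))) - (\<Sum>e\<in>E. \<Sum>u\<in>e. int (pos V E x (Inl u)))"
  unfolding cost_def by (simp add: sum_subtractf sum_distrib_left)

theorem lemma4:
  fixes V :: "'a set" and E :: "'a set set" and x y :: "nat \<Rightarrow> 'a + 'a set"
  assumes "simple_graph V E"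
    and "easy V E x" and "easy V E y"
    and "\<forall>u\<in>V. \<forall>w\<in>V. pos V E x (Inl u) < pos V E x (Inl w) \<longleftrightarrow> pos V E y (Inl u) < pos V E y (Inl w)"
  shows "cost V E x = cost V E y"
proof -
  have "(\<Sum>u\<in>e. int (pos V E x (Inl u))) = (\<Sum>u\<in>e. int (pos V E y (Inl u)))" if "e \<in> E" for e
  proof (rule sum.cong)
    fix u assume "u \<in> e"
    with that assms(1) have "u \<in> V"
      unfolding simple_graph_def by blast
    then show "int (pos V E x (Inl u)) = int (pos V E y (Inl u))"
      using easy_pos_vertex_eq[OF assms(2-4)] by simp
  qed simp
  then show ?thesis
    unfolding cost_eq_diff
    using easy_sum_pos_edges[OF assms(2)] easy_sum_pos_edges[OF assms(3)] by simp
qed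

end
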